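(* Let $T$ be a tree, $D\subseteq V(T)$, and let $\mathcal X_T$ be the hypergraph associated with $T$. Then $(T,D)$ is MBD Dominator-critical if and only if $\mathcal X_T$ has at least one edge and $D$ is a minimal transversal of $\mathcal X_T$.
   Context: For a tree $T'$, $S(T')$ is obtained by subdividing each edge of $T'$ exactly once; $\mathcal S=\{S(T'):T'\text{ a tree}\}$ and $X(S(T'))=V(T')$ (with $S(P_1)=P_1$, $X(P_1)=V(P_1)$). $F\in\mathcal S$ is a substructure in $T$ if $F$ is a subgraph of $T$ and $\deg_T(v)=\deg_F(v)$ for all $v\in X(F)$. The hypergraph $\mathcal X_T$ has vertex set $V(T)$ and edge set $\{X(F): F\in\mathcal S \text{ is a substructure in } T\}$. A transversal of a hypergraph is a vertex set meeting every edge; it is minimal if no proper subset is a transversal. In the MBD game on a predominated graph $(G,D)$, $D\subseteq V(G)$, Staller and Dominator alternately claim unclaimed vertices of $V(G)$, Staller first; Staller wins if she claims all of $N_G[v]$ for some $v\in V(G)\setminus D$, Dominator wins otherwise. $(G,D)$ is MBD Dominator-critical if $D\neq\emptyset$, Dominator wins on $(G,D)$, and Staller wins on $(G,D\setminus\{v\})$ for every $v\in D$. *)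

theory Defs
  imports Main
begin

definition graph :: "'a set \<Rightarrow> 'a set set \<Rightarrow> bool" where
  "graph V E \<longleftrightarrow> (\<forall>e\<in>E. card e = 2 \<and> e \<subseteq> V)"

definition connected_graph :: "'a set \<Rightarrow> 'a set set \<Rightarrow> bool" where
  "connected_graph V E \<longleftrightarrow>
     (\<forall>u\<in>V. \<forall>v\<in>V. (\<lambda>x y. {x, y} \<in> E)\<^sup>*\<^sup>* u v)"

definition has_cycle :: "'a set set \<Rightarrow> bool" where
  "has_cycle E \<longleftrightarrow> (\<exists>cs. length cs \<ge> 3 \<and> distinct cs \<and>
     (\<forall>i < length cs. {cs ! i, cs ! ((i + 1) mod length cs)} \<in> E))"

definition tree :: "'a set \<Rightarrow> 'a set set \<Rightarrow> bool" where
  "tree V E \<longleftrightarrow> graph V E \<and> finite V \<and> V \<noteq> {} \<and> connected_graph V E \<and> \<not> has_cycle E"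

definition deg :: "'a set set \<Rightarrow> 'a \<Rightarrow> nat" where
  "deg E v = card {e \<in> E. v \<in> e}"

definition closed_nbhd :: "'a set \<Rightarrow> 'a set set \<Rightarrow> 'a \<Rightarrow> 'a set" where
  "closed_nbhd V E v = insert v {u \<in> V. {u, v} \<in> E}"

text \<open>(VF, EF) is (a copy of) the subdivision S(T') of a tree T' = (X, E'), where the
  original vertices of T' form X = X(F), and each edge e of T' is subdivided by the
  new vertex s e.\<close>

definition is_subdivision :: "'a set \<Rightarrow> 'a set set \<Rightarrow> 'a set \<Rightarrow> bool" where
  "is_subdivision VF EF X \<longleftrightarrow>
     (\<exists>E' (s :: 'a set \<Rightarrow> 'a). tree X E' \<and> inj_on s E' \<and> s ` E' \<inter> X = {} \<and>
        VF = X \<union> s ` E' \<and> EF = {{x, s e} | x e. e \<in> E' \<and> x \<in> e})"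

definition substructure :: "'a set \<Rightarrow> 'a set set \<Rightarrow> 'a set \<Rightarrow> 'a set set \<Rightarrow> 'a set \<Rightarrow> bool" where
  "substructure V E VF EF X \<longleftrightarrow> is_subdivision VF EF X \<and> VF \<subseteq> V \<and> EF \<subseteq> E \<and>
     (\<forall>v\<in>X. deg E v = deg EF v)"

text \<open>Edge set of the hypergraph X_T (its vertex set is V).\<close>

definition hyp_X :: "'a set \<Rightarrow> 'a set set \<Rightarrow> 'a set set" where
  "hyp_X V E = {X. \<exists>VF EF. substructure V E VF EF X}"

definition transversal :: "'a set \<Rightarrow> 'a set set \<Rightarrow> 'a set \<Rightarrow> bool" where
  "transversal V H T \<longleftrightarrow> T \<subseteq> V \<and> (\<forall>h\<in>H. h \<inter> T \<noteq> {})"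

definition minimal_transversal :: "'a set \<Rightarrow> 'a set set \<Rightarrow> 'a set \<Rightarrow> bool" where
  "minimal_transversal V H T \<longleftrightarrow> transversal V H T \<and> (\<forall>T'. T' \<subset> T \<longrightarrow> \<not> transversal V H T')"

text \<open>Maker-Breaker domination game: position (S, Dm) = vertices claimed by Staller and
  Dominator, Staller to move. staller_wins V E D S Dm: Staller can force a win.\<close>

inductive staller_wins :: "'a set \<Rightarrow> 'a set set \<Rightarrow> 'a set \<Rightarrow> 'a set \<Rightarrow> 'a set \<Rightarrow> bool"
  for V E D where
  won: "v \<in> V - D \<Longrightarrow> closed_nbhd V E v \<subseteq> S \<Longrightarrow> staller_wins V E D S Dm"
| move: "x \<in> V - (S \<union> Dm) \<Longrightarrow>
     (V - (insert x S \<union> Dm) = {} \<longrightarrow> (\<exists>v\<in>V - D. closed_nbhd V E v \<subseteq> insert x S)) \<Longrightarrow>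
     (\<forall>y \<in> V - (insert x S \<union> Dm). staller_wins V E D (insert x S) (insert y Dm)) \<Longrightarrow>
     staller_wins V E D S Dm"

definition dominator_wins :: "'a set \<Rightarrow> 'a set set \<Rightarrow> 'a set \<Rightarrow> bool" where
  "dominator_wins V E D \<longleftrightarrow> \<not> staller_wins V E D {} {}"

definition MBD_dominator_critical :: "'a set \<Rightarrow> 'a set set \<Rightarrow> 'a set \<Rightarrow> bool" where
  "MBD_dominator_critical V E D \<longleftrightarrow> D \<noteq> {} \<and> dominator_wins V E D \<and>
     (\<forall>v\<in>D. \<not> dominator_wins V E (D - {v}))"

end

theory Submission
  imports Defs
begin

text \<open>Dominator wins on a forest (V, E) with predominated set D exactly when D meets X(F) for
  every substructure F; criticality of D and minimality of D as a transversal then both say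
  that D is a transversal none of whose one-vertex deletions is one.

  If X(F) avoids D, Staller claims the subdivision vertex next to a leaf x of what remains of
  the tree underlying F. Since x has the same degree in T as in F, this threatens the closed
  neighbourhood of x, so Dominator must claim x and the tree shrinks; at an isolated x Staller
  completes its neighbourhood. If D meets every X(F), the forest can be peeled into pendant
  edges and isolated vertices of D: a leaf outside D is paired with its neighbour p, because a
  substructure of T - l - p avoiding D is attached to p at a single vertex and would grow
  through p to a substructure containing l. The pairs dominate every vertex outside D, and
  Dominator answers each move by the partner of the claimed vertex.\<close>

section \<open>Walks and cycles\<close>

fun walk :: "'a set set \<Rightarrow> 'a list \<Rightarrow> bool" where
  "walk E [] \<longleftrightarrow> False"
| "walk E [x] \<longleftrightarrow> True"
| "walk E (x # y # xs) \<longleftrightarrow> {x, y} \<in> E \<and> walk E (y # xs)"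

lemma walk_Cons: "walk E (x # xs) \<longleftrightarrow> xs = [] \<or> ({x, hd xs} \<in> E \<and> walk E xs)"
  by (cases xs) auto

lemma walk_append: "walk E (xs @ y # zs) \<longleftrightarrow> walk E (xs @ [y]) \<and> walk E (y # zs)"
  by (induction xs) (auto simp: walk_Cons hd_append)

lemma walk_nth: "walk E xs \<Longrightarrow> Suc i < length xs \<Longrightarrow> {xs ! i, xs ! Suc i} \<in> E"
proof (induction E xs arbitrary: i rule: walk.induct)
  case (3 E x y xs)
  then show ?case by (cases i) auto
qed auto

lemma walk_mono: "walk E xs \<Longrightarrow> E \<subseteq> E' \<Longrightarrow> walk E' xs"
  by (induction E xs rule: walk.induct) auto

lemma walk_rev: "walk E xs \<Longrightarrow> walk E (rev xs)"
proof (induction E xs rule: walk.induct)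
  case (3 E x y xs)
  then have "walk E (rev xs @ [y])" "walk E [y, x]" by (simp_all add: insert_commute)
  then show ?case using walk_append[of E "rev xs" y "[x]"] by simp
qed auto

lemma walk_vertex_in_edge: "walk E xs \<Longrightarrow> 2 \<le> length xs \<Longrightarrow> z \<in> set xs \<Longrightarrow> \<exists>e\<in>E. z \<in> e"
proof (induction E xs rule: walk.induct)
  case (3 E x y xs)
  then show ?case by (cases xs) auto
qed auto

lemma rtranclp_imp_walk:
  assumes "(\<lambda>x y. {x, y} \<in> E)\<^sup>*\<^sup>* u v"
  obtains xs where "walk E xs" "hd xs = u" "last xs = v"
  using assms
proof (induction arbitrary: thesis rule: rtranclp_induct)
  case base
  show ?case by (rule base[of "[u]"]) simp_all
next
  case (step y z)
  obtain xs where xs: "walk E xs" "hd xs = u" "last xs = y" by (rule step.IH)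
  then obtain ys where ys: "xs = ys @ [y]" by (cases xs rule: rev_cases) auto
  then have "walk E (xs @ [z])"
    using xs(1) walk_append[of E ys y "[z]"] step.hyps(2) by simp
  moreover have "hd (xs @ [z]) = u" using xs by (cases xs) auto
  ultimately show ?case using step.prems by simp
qed

lemma walk_remove_loops:
  "walk E xs \<Longrightarrow> \<exists>ys. walk E ys \<and> distinct ys \<and> hd ys = hd xs \<and> last ys = last xs"
proof (induction "length xs" arbitrary: xs rule: less_induct)
  case less
  show ?case
  proof (cases "distinct xs")
    case False
    then obtain as bs cs y where d: "xs = as @ [y] @ bs @ [y] @ cs"
      using not_distinct_decomp by blast
    have "walk E (as @ [y])" "walk E (y # cs)"
      using less.prems d walk_append[of E as y "bs @ [y] @ cs"] walk_append[of E "as @ [y] @ bs" y cs]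
      by simp_all
    then have "walk E (as @ y # cs)" using walk_append[of E as y cs] by simp
    moreover have "hd (as @ y # cs) = hd xs" by (simp add: d hd_append)
    moreover have "last (as @ y # cs) = last xs" by (simp add: d last_append)
    moreover have "length (as @ y # cs) < length xs" using d by simp
    ultimately show ?thesis using less.hyps by metis
  qed (use less.prems in blast)
qed

lemma has_cycle_if_closed_walk:
  assumes "distinct xs" "walk E xs" "3 \<le> length xs" "{last xs, hd xs} \<in> E"
  shows "has_cycle E"
  unfolding has_cycle_def
proof (intro exI[of _ xs] conjI allI impI)
  fix i assume i: "i < length xs"
  show "{xs ! i, xs ! ((i + 1) mod length xs)} \<in> E"
  proof (cases "Suc i < length xs")
    case True
    then show ?thesis using walk_nth[OF assms(2) True] by simp
  next
    case False
    then have "i = length xs - 1" "i + 1 = length xs" using i by simp_all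
    then show ?thesis using assms(3,4)
      by (metis hd_conv_nth last_conv_nth list.size(3) mod_self not_numeral_le_zero)
  qed
qed (use assms in auto)

lemma has_cycle_mono: "has_cycle A \<Longrightarrow> A \<subseteq> B \<Longrightarrow> has_cycle B"
  unfolding has_cycle_def by blast

definition nbhd :: "'a set set \<Rightarrow> 'a \<Rightarrow> 'a set" where
  "nbhd E v = {u. {u, v} \<in> E}"

definition forest :: "'a set \<Rightarrow> 'a set set \<Rightarrow> bool" where
  "forest V E \<longleftrightarrow> graph V E \<and> finite V \<and> \<not> has_cycle E"

definition delete_vertices :: "'a set set \<Rightarrow> 'a set \<Rightarrow> 'a set set" where
  "delete_vertices E A = {e \<in> E. e \<inter> A = {}}"

lemma tree_imp_forest: "tree V E \<Longrightarrow> forest V E"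
  unfolding tree_def forest_def by blast

lemma nbhd_sym: "u \<in> nbhd E v \<longleftrightarrow> v \<in> nbhd E u"
  unfolding nbhd_def by (simp add: insert_commute)

lemma closed_nbhd_subset_nbhd: "closed_nbhd V E v \<subseteq> insert v (nbhd E v)"
  unfolding closed_nbhd_def nbhd_def by blast

lemma graph_edgeD: "graph V E \<Longrightarrow> {a, b} \<in> E \<Longrightarrow> a \<noteq> b \<and> a \<in> V \<and> b \<in> V"
  unfolding graph_def by (cases "a = b") auto

lemma graph_edgeE:
  assumes "graph V E" "e \<in> E"
  obtains a b where "e = {a, b}" "a \<noteq> b"
proof -
  have "card e = 2" using assms unfolding graph_def by blast
  then show ?thesis using that unfolding card_2_iff by blast
qed

lemma graph_nbhdD: "graph V E \<Longrightarrow> u \<in> nbhd E v \<Longrightarrow> u \<in> V \<and> v \<in> V \<and> u \<noteq> v"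
  unfolding nbhd_def using graph_edgeD by fastforce

lemma finite_edges: "graph V E \<Longrightarrow> finite V \<Longrightarrow> finite E"
  unfolding graph_def by (meson Pow_iff finite_Pow_iff finite_subset subsetI)

lemma incident_edges_eq:
  assumes "graph V E"
  shows "{e \<in> E. v \<in> e} = (\<lambda>u. {v, u}) ` nbhd E v"
proof (intro set_eqI iffI)
  fix e assume e: "e \<in> {e \<in> E. v \<in> e}"
  then obtain a b where "e = {a, b}" using graph_edgeE[OF assms] by blast
  then show "e \<in> (\<lambda>u. {v, u}) ` nbhd E v"
    using e by (auto simp: nbhd_def insert_commute image_iff)
qed (auto simp: nbhd_def insert_commute)

lemma deg_eq_card_nbhd:
  assumes "graph V E"
  shows "deg E v = card (nbhd E v)"
proof -
  have "inj_on (\<lambda>u. {v, u}) (nbhd E v)"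
    by (auto intro!: inj_onI dest: graph_nbhdD[OF assms] simp: doubleton_eq_iff)
  then show ?thesis unfolding deg_def incident_edges_eq[OF assms] by (rule card_image)
qed

lemma deg_eq_if_nbhd_eq:
  "graph V E \<Longrightarrow> graph V' E' \<Longrightarrow> nbhd E v = nbhd E' v \<Longrightarrow> deg E v = deg E' v"
  by (simp add: deg_eq_card_nbhd)

lemma nbhd_eq_if_deg_eq:
  assumes "finite E" "E' \<subseteq> E" "deg E v = deg E' v"
  shows "nbhd E v = nbhd E' v"
proof -
  have "{e \<in> E'. v \<in> e} = {e \<in> E. v \<in> e}"
    using assms unfolding deg_def by (intro card_subset_eq) auto
  then show ?thesis unfolding nbhd_def by blast
qed

lemma graph_delete_vertices: "graph V E \<Longrightarrow> graph (V - A) (delete_vertices E A)"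
  unfolding graph_def delete_vertices_def by blast

lemma delete_vertices_subset: "delete_vertices E A \<subseteq> E"
  unfolding delete_vertices_def by blast

lemma forest_delete_vertices: "forest V E \<Longrightarrow> forest (V - A) (delete_vertices E A)"
  unfolding forest_def
  using graph_delete_vertices has_cycle_mono delete_vertices_subset by blast

lemma nbhd_delete_vertices: "v \<notin> A \<Longrightarrow> nbhd (delete_vertices E A) v = nbhd E v - A"
  unfolding nbhd_def delete_vertices_def by auto

lemma closed_nbhd_delete_vertices:
  "closed_nbhd (V - A) (delete_vertices E A) v \<subseteq> closed_nbhd V E v"
  unfolding closed_nbhd_def delete_vertices_def by blast

section \<open>Leaves and pendant edges of forests\<close>

lemma forest_path_end_is_leaf:
  assumes "forest V E" "walk E (y0 # y1 # ys)" "distinct (y0 # y1 # ys)"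
    and unextendable: "\<And>u. {u, y0} \<in> E \<Longrightarrow> u \<in> set (y0 # y1 # ys)"
  shows "nbhd E y0 = {y1}"
proof -
  have G: "graph V E" and acyclic: "\<not> has_cycle E" using assms(1) unfolding forest_def by auto
  have "u = y1" if u: "{u, y0} \<in> E" for u
  proof (rule ccontr)
    assume "u \<noteq> y1"
    moreover have "u \<noteq> y0" using graph_edgeD[OF G u] by simp
    ultimately have "u \<in> set ys" using unextendable[OF u] by simp
    then obtain ys1 ys2 where ys: "ys = ys1 @ u # ys2" by (meson split_list)
    let ?cs = "y0 # y1 # ys1 @ [u]"
    have "distinct ?cs" using assms(3) ys by simp
    moreover have "walk E ?cs"
      using assms(2) ys walk_append[of E "y0 # y1 # ys1" u ys2] by simp
    ultimately have "has_cycle E" using has_cycle_if_closed_walk u by fastforce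
    then show False using acyclic by blast
  qed
  moreover have "{y0, y1} \<in> E" using assms(2) by simp
  ultimately show ?thesis unfolding nbhd_def by (auto simp: insert_commute)
qed

text \<open>The two ends of a longest path are leaves.\<close>

lemma forest_two_leaves:
  assumes F: "forest V E" and "e \<in> E"
  obtains x y u w where "x \<noteq> y" "nbhd E x = {u}" "nbhd E y = {w}"
proof -
  have G: "graph V E" and fin: "finite V" using F unfolding forest_def by auto
  define P where "P = {xs. set xs \<subseteq> V \<and> distinct xs \<and> walk E xs}"
  have finP: "finite P" unfolding P_def
    by (rule finite_subset[OF _ finite_subset_distinct[OF fin]]) auto
  obtain a b where ab: "e = {a, b}" using graph_edgeE[OF G \<open>e \<in> E\<close>] by blast
  then have "[a, b] \<in> P" unfolding P_def using \<open>e \<in> E\<close> graph_edgeD[OF G, of a b] by auto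
  then obtain xs where xs: "xs \<in> P" "length xs = Max (length ` P)"
    using Max_in[of "length ` P"] finP by fastforce
  then have longest: "length ys \<le> length xs" if "ys \<in> P" for ys
    using finP that by simp
  have "2 \<le> length xs" using longest[OF \<open>[a, b] \<in> P\<close>] by simp
  then obtain y0 y1 ys where xs_eq: "xs = y0 # y1 # ys"
    by (cases xs; cases "tl xs") auto
  have leaf: "nbhd E (hd zs) = {zs ! 1}" if zs: "zs \<in> P" "length zs = length xs" "zs = z0 # z1 # zs'"
    for zs z0 z1 zs'
  proof -
    have "u \<in> set zs" if u: "{u, z0} \<in> E" for u
    proof (rule ccontr)
      assume "u \<notin> set zs"
      then have "u # zs \<in> P"
        using zs u graph_edgeD[OF G u] unfolding P_def by (auto simp: insert_commute)
      then show False using longest zs(2) by fastforce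
    qed
    then show ?thesis using forest_path_end_is_leaf[OF F] zs unfolding P_def by auto
  qed
  have "rev xs \<in> P" using xs walk_rev unfolding P_def by auto
  obtain z0 z1 zs' where "rev xs = z0 # z1 # zs'"
    using \<open>2 \<le> length xs\<close> by (cases "rev xs"; cases "tl (rev xs)") auto
  then have "nbhd E (hd (rev xs)) = {rev xs ! 1}" using leaf[OF \<open>rev xs \<in> P\<close>] by simp
  moreover have "hd (rev xs) = last xs" using xs_eq by (simp add: hd_rev)
  ultimately have "nbhd E (last xs) = {rev xs ! 1}" by simp
  moreover have "nbhd E y0 = {y1}" using leaf[OF xs(1) refl xs_eq] xs_eq by simp
  moreover have "y0 \<noteq> last xs" using xs xs_eq unfolding P_def by auto
  ultimately show ?thesis using that by blast
qed

lemma forest_leaf_or_isolated: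
  assumes "forest V E" "V \<noteq> {}"
  obtains x where "x \<in> V" "nbhd E x = {} \<or> (\<exists>u. nbhd E x = {u})"
proof (cases "E = {}")
  case True
  obtain x where "x \<in> V" using assms(2) by blast
  moreover have "nbhd E x = {}" using True unfolding nbhd_def by blast
  ultimately show ?thesis using that by blast
next
  case False
  have G: "graph V E" using assms(1) unfolding forest_def by blast
  from False obtain e where "e \<in> E" by blast
  then obtain x y u w where "nbhd E x = {u}" by (rule forest_two_leaves[OF assms(1)])
  moreover then have "x \<in> V" using graph_nbhdD[OF G] by blast
  ultimately show ?thesis using that by blast
qed

lemma acyclic_neighbours_joined_avoiding_eq:
  assumes acyclic: "\<not> has_cycle E" and "E' \<subseteq> E" and avoid: "\<forall>e\<in>E'. p \<notin> e"
    and path: "(\<lambda>x y. {x, y} \<in> E')\<^sup>*\<^sup>* u v" and "{u, p} \<in> E" "{v, p} \<in> E"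
  shows "u = v"
proof (rule ccontr)
  assume "u \<noteq> v"
  obtain xs0 where "walk E' xs0" "hd xs0 = u" "last xs0 = v" by (rule rtranclp_imp_walk[OF path])
  then obtain xs where xs: "walk E' xs" "distinct xs" "hd xs = u" "last xs = v"
    using walk_remove_loops by metis
  then have "xs \<noteq> []" by auto
  then have "2 \<le> length xs" using xs(3,4) \<open>u \<noteq> v\<close> by (cases xs; cases "tl xs") auto
  then have "p \<notin> set xs" using walk_vertex_in_edge[OF xs(1)] avoid by blast
  have "walk E (p # xs)"
    using walk_mono[OF xs(1) \<open>E' \<subseteq> E\<close>] xs(3) \<open>xs \<noteq> []\<close> \<open>{u, p} \<in> E\<close>
    by (simp add: walk_Cons insert_commute)
  moreover have "distinct (p # xs)" "3 \<le> length (p # xs)"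
    using xs(2) \<open>p \<notin> set xs\<close> \<open>2 \<le> length xs\<close> by simp_all
  moreover have "{last (p # xs), hd (p # xs)} \<in> E" using xs(4) \<open>xs \<noteq> []\<close> \<open>{v, p} \<in> E\<close> by simp
  ultimately show False using has_cycle_if_closed_walk acyclic by blast
qed

text \<open>On a cycle through the new leaf l both cycle neighbours of l would have to be g.\<close>

lemma has_cycle_insert_pendant_edge:
  assumes "has_cycle (insert {g, l} E)" and no_l: "\<forall>e\<in>E. l \<notin> e" and "g \<noteq> l"
  shows "has_cycle E"
proof -
  obtain cs where cs: "3 \<le> length cs" "distinct cs"
    and edges: "\<forall>i<length cs. {cs ! i, cs ! ((i + 1) mod length cs)} \<in> insert {g, l} E"
    using assms(1) unfolding has_cycle_def by blast
  define n where "n = length cs"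
  have at_l: "{cs ! j, cs ! ((j + 1) mod n)} = {g, l}"
    if "j < n" "l \<in> {cs ! j, cs ! ((j + 1) mod n)}" for j
    using edges that no_l unfolding n_def by blast
  show ?thesis
  proof (cases "l \<in> set cs")
    case False
    have "\<forall>i<n. {cs ! i, cs ! ((i + 1) mod n)} \<in> E"
    proof (intro allI impI)
      fix i assume "i < n"
      moreover have "(i + 1) mod n < n" using cs(1) unfolding n_def by (intro mod_less_divisor) linarith
      ultimately have "l \<notin> {cs ! i, cs ! ((i + 1) mod n)}" using False n_def by auto
      then show "{cs ! i, cs ! ((i + 1) mod n)} \<in> E" using edges \<open>i < n\<close> n_def by auto
    qed
    then show ?thesis unfolding has_cycle_def using cs n_def by blast
  next
    case True
    then obtain i where i: "i < n" "cs ! i = l" by (metis in_set_conv_nth n_def)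
    define j k where "j = (i + 1) mod n" and "k = (i + n - 1) mod n"
    have n3: "3 \<le> n" using cs(1) n_def by simp
    have "j < n" "k < n" "(k + 1) mod n = i" "(j + 1) mod n \<noteq> i"
      using i(1) n3 unfolding j_def k_def by (auto simp: mod_Suc_eq mod_if)
    have "cs ! j = g" using at_l[of i] i \<open>g \<noteq> l\<close> unfolding j_def by (auto simp: doubleton_eq_iff)
    moreover have "cs ! k = g" using at_l[of k] \<open>k < n\<close> \<open>(k + 1) mod n = i\<close> i \<open>g \<noteq> l\<close>
      by (auto simp: doubleton_eq_iff)
    ultimately have "j = k"
      using cs(2) \<open>j < n\<close> \<open>k < n\<close> n_def by (metis nth_eq_iff_index_eq)
    then show ?thesis using \<open>(k + 1) mod n = i\<close> \<open>(j + 1) mod n \<noteq> i\<close> by simp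
  qed
qed

lemma tree_insert_leaf:
  assumes tree: "tree X E" and "g \<in> X" "l \<notin> X"
  shows "tree (insert l X) (insert {g, l} E)"
proof -
  have G: "graph X E" and acyclic: "\<not> has_cycle E" using tree unfolding tree_def by auto
  have no_l: "\<forall>e\<in>E. l \<notin> e" using G \<open>l \<notin> X\<close> unfolding graph_def by blast
  have "g \<noteq> l" using assms by blast
  let ?R = "\<lambda>x y. {x, y} \<in> insert {g, l} E"
  have "symp ?R" by (auto intro: sympI simp: insert_commute)
  then have sym: "symp ?R\<^sup>*\<^sup>*" by (rule symp_rtranclp)
  have to_g: "?R\<^sup>*\<^sup>* u g" if "u \<in> insert l X" for u
  proof (cases "u = l")
    case True
    then show ?thesis by (intro r_into_rtranclp) (simp add: insert_commute)
  next
    case False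
    then have "(\<lambda>x y. {x, y} \<in> E)\<^sup>*\<^sup>* u g"
      using tree that \<open>g \<in> X\<close> unfolding tree_def connected_graph_def by blast
    then show ?thesis by (rule rtranclp_mono[THEN predicate2D, rotated]) auto
  qed
  have "connected_graph (insert l X) (insert {g, l} E)"
    unfolding connected_graph_def
    using to_g sym by (meson rtranclp_trans sympD)
  moreover have "graph (insert l X) (insert {g, l} E)"
    using G \<open>g \<in> X\<close> \<open>g \<noteq> l\<close> unfolding graph_def by auto
  moreover have "\<not> has_cycle (insert {g, l} E)"
    using acyclic has_cycle_insert_pendant_edge[OF _ no_l \<open>g \<noteq> l\<close>] by blast
  ultimately show ?thesis using tree unfolding tree_def by blast
qed

section \<open>Staller wins on a substructure avoiding D\<close>

lemma substructureE:
  assumes "substructure V E VF EF X"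
  obtains Et s where "tree X Et" "inj_on s Et" "s ` Et \<inter> X = {}" "VF = X \<union> s ` Et"
    "EF = {{x, s e} |x e. e \<in> Et \<and> x \<in> e}" "VF \<subseteq> V" "EF \<subseteq> E"
    "\<forall>v\<in>X. deg E v = deg EF v"
  using assms unfolding substructure_def is_subdivision_def by blast

lemma subdivision_nbhd:
  assumes "s ` Et \<inter> X = {}" "x \<in> X"
  shows "nbhd {{y, s e} |y e. e \<in> Et \<and> y \<in> e} x = s ` {e \<in> Et. x \<in> e}"
proof (intro set_eqI iffI)
  fix u assume "u \<in> nbhd {{y, s e} |y e. e \<in> Et \<and> y \<in> e} x"
  then obtain y e where e: "{u, x} = {y, s e}" "e \<in> Et" "y \<in> e" unfolding nbhd_def by blast
  moreover have "s e \<noteq> x" using assms e(2) by blast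
  ultimately show "u \<in> s ` {e \<in> Et. x \<in> e}" by (auto simp: doubleton_eq_iff)
qed (auto simp: nbhd_def insert_commute)

lemma substructure_nbhd_eq:
  "substructure V E VF EF X \<Longrightarrow> finite E \<Longrightarrow> x \<in> X \<Longrightarrow> nbhd E x = nbhd EF x"
  unfolding substructure_def by (simp add: nbhd_eq_if_deg_eq)

lemma staller_wins_completing_move:
  assumes "x \<in> V - (S \<union> Dm)" "v \<in> V - D" "closed_nbhd V E v \<subseteq> insert x S"
  shows "staller_wins V E D S Dm"
  using assms by (blast intro: staller_wins.move staller_wins.won)

lemma staller_wins_forcing_move:
  assumes a: "a \<in> V - (S \<union> Dm)" and x: "x \<in> V - (insert a S \<union> Dm)" "x \<in> V - D"
    and threat: "closed_nbhd V E x \<subseteq> insert x (insert a S)"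
    and reply: "staller_wins V E D (insert a S) (insert x Dm)"
  shows "staller_wins V E D S Dm"
proof (rule staller_wins.move[OF a])
  show "V - (insert a S \<union> Dm) = {} \<longrightarrow> (\<exists>v\<in>V - D. closed_nbhd V E v \<subseteq> insert a S)"
    using x by blast
  show "\<forall>y\<in>V - (insert a S \<union> Dm). staller_wins V E D (insert a S) (insert y Dm)"
  proof
    fix y assume "y \<in> V - (insert a S \<union> Dm)"
    then show "staller_wins V E D (insert a S) (insert y Dm)"
      using reply x threat by (cases "y = x") (auto intro: staller_wins_completing_move)
  qed
qed

lemma staller_wins_subdivided_forest:
  assumes "forest X Et" "X \<noteq> {}" "inj_on s Et" "s ` Et \<inter> X = {}" "X \<inter> D = {}"
    and "X \<union> s ` Et \<subseteq> V - (S \<union> Dm)"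
    and "\<forall>x\<in>X. closed_nbhd V E x \<subseteq> insert x (s ` {e \<in> Et. x \<in> e}) \<union> S"
  shows "staller_wins V E D S Dm"
  using assms
proof (induction "card X" arbitrary: X Et S Dm rule: less_induct)
  case less
  note F = less.prems(1) and free = less.prems(6) and nb = less.prems(7)
  have G: "graph X Et" and fin: "finite X" using F unfolding forest_def by auto
  obtain x where x: "x \<in> X" and leaf: "nbhd Et x = {} \<or> (\<exists>u. nbhd Et x = {u})"
    using forest_leaf_or_isolated[OF F less.prems(2)] by blast
  have x_free: "x \<in> V - (S \<union> Dm)" "x \<in> V - D" using x free less.prems(5) by blast+
  consider "nbhd Et x = {}" | y where "nbhd Et x = {y}" using leaf by blast
  then show ?case
  proof cases
    case 1
    then have none: "{e \<in> Et. x \<in> e} = {}" using incident_edges_eq[OF G, of x] by simp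
    have "closed_nbhd V E x \<subseteq> insert x (s ` {e \<in> Et. x \<in> e}) \<union> S" using nb x by blast
    then have "closed_nbhd V E x \<subseteq> insert x S" unfolding none by simp
    then show ?thesis by (rule staller_wins_completing_move[OF x_free])
  next
    case (2 y)
    define a where "a = s {x, y}"
    have edges_x: "{e \<in> Et. x \<in> e} = {{x, y}}" using incident_edges_eq[OF G, of x] 2 by simp
    have "y \<in> X" "y \<noteq> x" using graph_nbhdD[OF G, of y x] 2 by auto
    have a: "a \<in> V - (S \<union> Dm)" "a \<notin> X" using free less.prems(4) edges_x unfolding a_def by blast+
    have "closed_nbhd V E x \<subseteq> insert x (s ` {e \<in> Et. x \<in> e}) \<union> S" using nb x by blast
    then have threat: "closed_nbhd V E x \<subseteq> insert x (insert a S)"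
      unfolding edges_x a_def by auto
    define Et' where "Et' = delete_vertices Et {x}"
    have Et': "Et' = Et - {{x, y}}" using edges_x unfolding Et'_def delete_vertices_def by blast
    have "a \<notin> s ` Et'"
      using less.prems(3) edges_x unfolding Et' a_def inj_on_def by blast
    have "staller_wins V E D (insert a S) (insert x Dm)"
    proof (rule less.hyps)
      show "card (X - {x}) < card X" using fin x by (rule card_Diff1_less)
      show "forest (X - {x}) Et'" unfolding Et'_def using F by (rule forest_delete_vertices)
      show "X - {x} \<noteq> {}" using \<open>y \<in> X\<close> \<open>y \<noteq> x\<close> by blast
      show "inj_on s Et'" using less.prems(3) unfolding Et' by (rule inj_on_subset) blast
      show "s ` Et' \<inter> (X - {x}) = {}" "(X - {x}) \<inter> D = {}"
        using less.prems(4,5) unfolding Et' by blast+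
      show "X - {x} \<union> s ` Et' \<subseteq> V - (insert a S \<union> insert x Dm)"
        using free \<open>a \<notin> s ` Et'\<close> a less.prems(4) x unfolding Et' by blast
      show "\<forall>w\<in>X - {x}. closed_nbhd V E w \<subseteq> insert w (s ` {e \<in> Et'. w \<in> e}) \<union> insert a S"
      proof
        fix w assume "w \<in> X - {x}"
        moreover have "s ` {e \<in> Et. w \<in> e} \<subseteq> insert a (s ` {e \<in> Et'. w \<in> e})"
          unfolding Et' a_def by blast
        ultimately show "closed_nbhd V E w \<subseteq> insert w (s ` {e \<in> Et'. w \<in> e}) \<union> insert a S"
          using nb by blast
      qed
    qed
    moreover have "x \<in> V - (insert a S \<union> Dm)" using x_free a(2) x by blast
    ultimately show ?thesis by (intro staller_wins_forcing_move[OF a(1) _ x_free(2) threat])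
  qed
qed

lemma staller_wins_if_substructure_avoids:
  assumes G: "graph V E" "finite V" and sub: "substructure V E VF EF X" and "X \<inter> D = {}"
  shows "staller_wins V E D {} {}"
proof -
  obtain Et s where st: "tree X Et" "inj_on s Et" "s ` Et \<inter> X = {}" "VF = X \<union> s ` Et"
    "EF = {{x, s e} |x e. e \<in> Et \<and> x \<in> e}" "VF \<subseteq> V"
    by (rule substructureE[OF sub])
  have "nbhd E x = s ` {e \<in> Et. x \<in> e}" if "x \<in> X" for x
    using substructure_nbhd_eq[OF sub finite_edges[OF G] that] subdivision_nbhd[OF st(3) that] st(5)
    by simp
  then have "\<forall>x\<in>X. closed_nbhd V E x \<subseteq> insert x (s ` {e \<in> Et. x \<in> e}) \<union> {}"
    using closed_nbhd_subset_nbhd by fastforce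
  moreover have "forest X Et" using st(1) by (rule tree_imp_forest)
  moreover have "X \<noteq> {}" using st(1) unfolding tree_def by blast
  moreover have "X \<union> s ` Et \<subseteq> V - ({} \<union> {})" using st(4,6) by simp
  ultimately show ?thesis by (intro staller_wins_subdivided_forest[OF _ _ st(2,3) assms(4)])
qed

section \<open>Pairing strategies\<close>

definition dominating_pairing :: "'a set \<Rightarrow> 'a set set \<Rightarrow> 'a set \<Rightarrow> 'a set set \<Rightarrow> bool" where
  "dominating_pairing V E D P \<longleftrightarrow> (\<forall>p\<in>P. card p = 2 \<and> p \<subseteq> V) \<and>
     (\<forall>p\<in>P. \<forall>q\<in>P. p \<inter> q \<noteq> {} \<longrightarrow> p = q) \<and> (\<forall>w\<in>V - D. \<exists>p\<in>P. p \<subseteq> closed_nbhd V E w)"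

lemma dominating_pairingD:
  assumes "dominating_pairing V E D P"
  shows "p \<in> P \<Longrightarrow> card p = 2"
    and "p \<in> P \<Longrightarrow> p \<subseteq> V"
    and "p \<in> P \<Longrightarrow> q \<in> P \<Longrightarrow> x \<in> p \<Longrightarrow> x \<in> q \<Longrightarrow> p = q"
    and "w \<in> V - D \<Longrightarrow> \<exists>p\<in>P. p \<subseteq> closed_nbhd V E w"
proof -
  have *: "\<forall>p\<in>P. card p = 2 \<and> p \<subseteq> V" "\<forall>p\<in>P. \<forall>q\<in>P. p \<inter> q \<noteq> {} \<longrightarrow> p = q"
    "\<forall>w\<in>V - D. \<exists>p\<in>P. p \<subseteq> closed_nbhd V E w"
    using assms unfolding dominating_pairing_def by simp_all
  show "p \<in> P \<Longrightarrow> card p = 2" "p \<in> P \<Longrightarrow> p \<subseteq> V" "w \<in> V - D \<Longrightarrow> \<exists>p\<in>P. p \<subseteq> closed_nbhd V E w"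
    using *(1,3) by simp_all
  show "p \<in> P \<Longrightarrow> q \<in> P \<Longrightarrow> x \<in> p \<Longrightarrow> x \<in> q \<Longrightarrow> p = q"
    using *(2) by (metis disjoint_iff)
qed

lemma dominating_pairing_pairE:
  assumes "dominating_pairing V E D P" "p \<in> P"
  obtains a b where "p = {a, b}" "a \<noteq> b"
  using dominating_pairingD(1)[OF assms] unfolding card_2_iff by blast

definition respects_pairing :: "'a set set \<Rightarrow> 'a set \<Rightarrow> 'a set \<Rightarrow> bool" where
  "respects_pairing P S Dm \<longleftrightarrow>
     S \<inter> Dm = {} \<and> (\<forall>p\<in>P. \<forall>a\<in>p. \<forall>b\<in>p. a \<noteq> b \<longrightarrow> a \<in> S \<longrightarrow> b \<in> Dm)"

lemma respects_pairingD:
  "respects_pairing P S Dm \<Longrightarrow> p \<in> P \<Longrightarrow> a \<in> p \<Longrightarrow> b \<in> p \<Longrightarrow> a \<noteq> b \<Longrightarrow> a \<in> S \<Longrightarrow> b \<in> Dm"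
  unfolding respects_pairing_def by blast

lemma respects_pairing_insert_dominator:
  "respects_pairing P S Dm \<Longrightarrow> y \<notin> S \<Longrightarrow> respects_pairing P S (insert y Dm)"
  unfolding respects_pairing_def by auto

lemma respects_pairing_not_won:
  assumes "dominating_pairing V E D P" "respects_pairing P S Dm" "v \<in> V - D"
  shows "\<not> closed_nbhd V E v \<subseteq> S"
proof
  assume won: "closed_nbhd V E v \<subseteq> S"
  obtain p where p: "p \<in> P" "p \<subseteq> closed_nbhd V E v"
    using dominating_pairingD(4)[OF assms(1,3)] by blast
  obtain a b where ab: "p = {a, b}" "a \<noteq> b" by (rule dominating_pairing_pairE[OF assms(1) p(1)])
  then have "a \<in> S" "b \<in> S" using won ab(1) p(2) by auto
  moreover have "b \<in> Dm" using respects_pairingD[OF assms(2) p(1)] ab \<open>a \<in> S\<close> by blast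
  ultimately show False using assms(2) unfolding respects_pairing_def by auto
qed

lemma respects_pairing_insert:
  assumes "respects_pairing P S Dm" "Dm \<subseteq> Dm'" "insert x S \<inter> Dm' = {}"
    and "\<forall>q\<in>P. x \<in> q \<longrightarrow> q - {x} \<subseteq> Dm'"
  shows "respects_pairing P (insert x S) Dm'"
  using assms unfolding respects_pairing_def by auto

lemma respects_pairing_response:
  assumes P: "dominating_pairing V E D P" and resp: "respects_pairing P S Dm"
    and x: "x \<in> V - (S \<union> Dm)"
  shows "respects_pairing P (insert x S) Dm \<or>
    (\<exists>y\<in>V - (insert x S \<union> Dm). respects_pairing P (insert x S) (insert y Dm))"
proof (cases "\<exists>p\<in>P. \<exists>b\<in>p. x \<in> p \<and> b \<noteq> x \<and> b \<notin> Dm")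
  case True
  then obtain p b where p: "p \<in> P" "x \<in> p" "b \<in> p" "b \<noteq> x" "b \<notin> Dm" by blast
  have "b \<in> V" using dominating_pairingD(2)[OF P p(1)] p(3) by blast
  moreover have "b \<notin> S" using respects_pairingD[OF resp p(1,3,2,4)] x by blast
  moreover have "q - {x} \<subseteq> insert b Dm" if "q \<in> P" "x \<in> q" for q
  proof -
    have "q = p" using dominating_pairingD(3)[OF P that(1) p(1) that(2) p(2)] .
    moreover obtain a' b' where "p = {a', b'}" by (rule dominating_pairing_pairE[OF P p(1)])
    ultimately show ?thesis using p(2-4) by auto
  qed
  moreover have "insert x S \<inter> insert b Dm = {}"
    using resp x \<open>b \<notin> S\<close> p(4) unfolding respects_pairing_def by blast
  ultimately show ?thesis
    using respects_pairing_insert[OF resp, of "insert b Dm" x] x p(4,5) by blast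
next
  case False
  then have "\<forall>q\<in>P. x \<in> q \<longrightarrow> q - {x} \<subseteq> Dm" by blast
  moreover have "insert x S \<inter> Dm = {}" using resp x unfolding respects_pairing_def by blast
  ultimately show ?thesis using respects_pairing_insert[OF resp order_refl] by blast
qed

lemma staller_loses_against_pairing:
  assumes "staller_wins V E D S Dm" "dominating_pairing V E D P"
  shows "\<not> respects_pairing P S Dm"
  using assms
proof (induction rule: staller_wins.induct)
  case (won v S Dm)
  then show ?case using respects_pairing_not_won[OF won.prems _ won.hyps(1)] by blast
next
  case (move x S Dm)
  show ?case
  proof
    assume "respects_pairing P S Dm"
    from respects_pairing_response[OF move.prems this move.hyps(1)] show False
    proof
      assume resp: "respects_pairing P (insert x S) Dm"
      show False
      proof (cases "V - (insert x S \<union> Dm) = {}")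
        case True
        then show False using move.hyps(2) respects_pairing_not_won[OF move.prems resp] by blast
      next
        case False
        then obtain y where "y \<in> V - (insert x S \<union> Dm)" by blast
        then show False
          using move.IH move.prems respects_pairing_insert_dominator[OF resp] by blast
      qed
    next
      assume "\<exists>y\<in>V - (insert x S \<union> Dm). respects_pairing P (insert x S) (insert y Dm)"
      then show False using move.IH move.prems by blast
    qed
  qed
qed

lemma dominator_wins_if_dominating_pairing:
  "dominating_pairing V E D P \<Longrightarrow> dominator_wins V E D"
  unfolding dominator_wins_def using staller_loses_against_pairing respects_pairing_def by blast

section \<open>Peeling a forest whose substructures all meet D\<close>

lemma is_subdivision_graph:
  assumes "is_subdivision VF EF X"
  shows "graph VF EF"
proof -
  obtain Et s where st: "tree X Et" "s ` Et \<inter> X = {}" "VF = X \<union> s ` Et"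
    "EF = {{x, s e} |x e. e \<in> Et \<and> x \<in> e}"
    using assms unfolding is_subdivision_def by blast
  have "graph X Et" using st(1) unfolding tree_def by simp
  show ?thesis unfolding graph_def
  proof
    fix f assume "f \<in> EF"
    then obtain x e where f: "f = {x, s e}" "e \<in> Et" "x \<in> e" using st(4) by blast
    have "x \<in> X" using \<open>graph X Et\<close> f(2,3) unfolding graph_def by blast
    moreover have "s e \<notin> X" using st(2) f(2) by blast
    ultimately have "x \<noteq> s e" by blast
    then show "card f = 2 \<and> f \<subseteq> VF" using f st(3) \<open>x \<in> X\<close> by auto
  qed
qed

lemma substructure_connected:
  assumes sub: "substructure V E VF EF X" and "x \<in> X" "y \<in> X"
  shows "(\<lambda>x y. {x, y} \<in> E)\<^sup>*\<^sup>* x y"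
proof -
  obtain Et s where st: "tree X Et" "EF = {{x, s e} |x e. e \<in> Et \<and> x \<in> e}" "EF \<subseteq> E"
    by (rule substructureE[OF sub])
  have "(\<lambda>x y. {x, y} \<in> Et)\<^sup>*\<^sup>* x y"
    using st(1) assms(2,3) unfolding tree_def connected_graph_def by blast
  then show ?thesis
  proof (induction rule: rtranclp_induct)
    case (step y z)
    have "{y, s {y, z}} \<in> E" "{s {y, z}, z} \<in> E"
      using st(2,3) step(2) by (auto simp: insert_commute)
    then show ?case using step(3) by (meson rtranclp.rtrancl_into_rtrancl)
  qed simp
qed

lemma substructure_delete_vertices_lift:
  assumes G: "graph V E" and sub: "substructure (V - A) (delete_vertices E A) VF EF X"
    and no_A: "\<forall>x\<in>X. nbhd E x \<inter> A = {}"
  shows "substructure V E VF EF X"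
proof -
  have X: "X \<subseteq> V - A" and sub': "is_subdivision VF EF X" "VF \<subseteq> V - A"
    "EF \<subseteq> delete_vertices E A" "\<forall>v\<in>X. deg (delete_vertices E A) v = deg EF v"
    using sub unfolding substructure_def is_subdivision_def by auto
  have "deg E x = deg (delete_vertices E A) x" if "x \<in> X" for x
  proof (rule deg_eq_if_nbhd_eq[OF G graph_delete_vertices[OF G]])
    have "x \<notin> A" using that X by blast
    then show "nbhd E x = nbhd (delete_vertices E A) x"
      using nbhd_delete_vertices[of x A E] no_A that by (simp add: Diff_triv)
  qed
  then show ?thesis
    using sub' delete_vertices_subset[of E A] unfolding substructure_def by auto
qed

lemma is_subdivision_insert_leaf:
  assumes tree: "tree X Et" and inj: "inj_on s Et" and disj: "s ` Et \<inter> X = {}"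
    and "g \<in> X" "l \<notin> X \<union> s ` Et" "p \<notin> X \<union> s ` Et" "l \<noteq> p"
  shows "is_subdivision (X \<union> s ` Et \<union> {l, p})
    (insert {g, p} (insert {l, p} {{x, s e} |x e. e \<in> Et \<and> x \<in> e})) (insert l X)"
proof -
  have "{g, l} \<notin> Et" using tree \<open>l \<notin> X \<union> s ` Et\<close> unfolding tree_def graph_def by blast
  define s' where "s' = s({g, l} := p)"
  have s'_Et: "\<forall>e\<in>Et. s' e = s e" "s' {g, l} = p"
    unfolding s'_def using \<open>{g, l} \<notin> Et\<close> by auto
  then have s'_image: "s' ` insert {g, l} Et = insert p (s ` Et)" by auto
  have "inj_on s' (insert {g, l} Et)"
  proof (rule inj_on_insert[THEN iffD2], rule conjI)
    show "inj_on s' Et" using inj s'_Et(1) by (metis inj_on_cong)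
    show "s' {g, l} \<notin> s' ` (Et - {{g, l}})" using s'_Et \<open>p \<notin> X \<union> s ` Et\<close> by auto
  qed
  moreover have "s' ` insert {g, l} Et \<inter> insert l X = {}"
    unfolding s'_image using assms by auto
  moreover have "insert {g, p} (insert {l, p} {{x, s e} |x e. e \<in> Et \<and> x \<in> e})
      = {{x, s' e} |x e. e \<in> insert {g, l} Et \<and> x \<in> e}"
  proof (intro set_eqI iffI)
    fix f assume "f \<in> insert {g, p} (insert {l, p} {{x, s e} |x e. e \<in> Et \<and> x \<in> e})"
    then consider "f = {g, p}" | "f = {l, p}" | x e where "f = {x, s e}" "e \<in> Et" "x \<in> e"
      by blast
    then show "f \<in> {{x, s' e} |x e. e \<in> insert {g, l} Et \<and> x \<in> e}"
      by cases (use s'_Et in force)+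
  next
    fix f assume "f \<in> {{x, s' e} |x e. e \<in> insert {g, l} Et \<and> x \<in> e}"
    then obtain x e where f: "f = {x, s' e}" "e \<in> insert {g, l} Et" "x \<in> e" by blast
    then show "f \<in> insert {g, p} (insert {l, p} {{x, s e} |x e. e \<in> Et \<and> x \<in> e})"
      using s'_Et by (cases "e = {g, l}") auto
  qed
  moreover have "X \<union> s ` Et \<union> {l, p} = insert l X \<union> s' ` insert {g, l} Et"
    unfolding s'_image by auto
  moreover have "tree (insert l X) (insert {g, l} Et)"
    using \<open>g \<in> X\<close> \<open>l \<notin> X \<union> s ` Et\<close> by (intro tree_insert_leaf[OF tree]) auto
  ultimately show ?thesis unfolding is_subdivision_def by metis
qed

lemma leaf_edge: "nbhd E l = {p} \<Longrightarrow> {l, p} \<in> E"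
  unfolding nbhd_def by (auto simp: insert_commute)

lemma nbhd_minus_leaf:
  assumes "nbhd E l = {p}" "x \<noteq> l" "x \<noteq> p"
  shows "nbhd E x = nbhd (delete_vertices E {l, p}) x \<union> (if {x, p} \<in> E then {p} else {})"
proof -
  have "l \<notin> nbhd E x" using assms nbhd_sym[of l E x] by auto
  then show ?thesis
    using nbhd_delete_vertices[of x "{l, p}" E] assms(2,3) by (auto simp: nbhd_def insert_commute)
qed

lemma substructure_insert_leaf:
  assumes G: "graph V E" "finite V" and leaf: "nbhd E l = {p}"
    and sub: "substructure (V - {l, p}) (delete_vertices E {l, p}) VF EF X"
    and attach: "{x \<in> X. {x, p} \<in> E} = {g}"
  shows "substructure V E (VF \<union> {l, p}) (insert {g, p} (insert {l, p} EF)) (insert l X)"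
proof -
  define E' where "E' = delete_vertices E {l, p}"
  define EF' where "EF' = insert {g, p} (insert {l, p} EF)"
  obtain Et s where st: "tree X Et" "inj_on s Et" "s ` Et \<inter> X = {}" "VF = X \<union> s ` Et"
    "EF = {{x, s e} |x e. e \<in> Et \<and> x \<in> e}" "VF \<subseteq> V - {l, p}" "EF \<subseteq> E'"
    unfolding E'_def by (rule substructureE[OF sub])
  have "{l, p} \<in> E" using leaf by (rule leaf_edge)
  then have "l \<noteq> p" "l \<in> V" "p \<in> V" using graph_edgeD[OF G(1)] by auto
  have g: "g \<in> X" "{g, p} \<in> E" using attach by auto
  have "l \<notin> VF" "p \<notin> VF" "X \<subseteq> VF" using st(4,6) by auto
  have subdiv: "is_subdivision (VF \<union> {l, p}) EF' (insert l X)"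
    unfolding EF'_def st(4,5)
    using is_subdivision_insert_leaf[OF st(1-3) g(1) _ _ \<open>l \<noteq> p\<close>] \<open>l \<notin> VF\<close> \<open>p \<notin> VF\<close> st(4)
    by simp
  have "EF' \<subseteq> E" using st(7) delete_vertices_subset[of E "{l, p}"] \<open>{l, p} \<in> E\<close> g(2)
    unfolding EF'_def E'_def by blast
  moreover have "VF \<union> {l, p} \<subseteq> V" using st(6) \<open>l \<in> V\<close> \<open>p \<in> V\<close> by blast
  moreover have "nbhd E x = nbhd EF' x" if "x \<in> insert l X" for x
  proof (cases "x = l")
    case True
    have "\<forall>f\<in>EF. f \<subseteq> VF" using is_subdivision_graph[of VF EF X] sub
      unfolding graph_def substructure_def by blast
    then have "nbhd EF' l = {p}"
      unfolding EF'_def nbhd_def using \<open>l \<notin> VF\<close> \<open>X \<subseteq> VF\<close> g(1) \<open>l \<noteq> p\<close>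
      by (auto simp: doubleton_eq_iff)
    then show ?thesis using True leaf by simp
  next
    case False
    then have x: "x \<in> X" "x \<noteq> l" "x \<noteq> p" using that \<open>X \<subseteq> VF\<close> \<open>p \<notin> VF\<close> by auto
    have "nbhd EF x = nbhd E' x"
      using substructure_nbhd_eq[OF sub _ x(1)] finite_edges[OF graph_delete_vertices[OF G(1)]] G(2)
      unfolding E'_def by simp
    moreover have "nbhd EF' x = nbhd EF x \<union> (if x = g then {p} else {})"
      unfolding EF'_def nbhd_def using x by (auto simp: doubleton_eq_iff)
    moreover have "{x, p} \<in> E \<longleftrightarrow> x = g" using attach x(1) by blast
    ultimately show ?thesis using nbhd_minus_leaf[OF leaf x(2,3)] unfolding E'_def by simp
  qed
  then have "\<forall>x\<in>insert l X. deg E x = deg EF' x"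
    using deg_eq_if_nbhd_eq[OF G(1) is_subdivision_graph[OF subdiv]] by blast
  ultimately show ?thesis using subdiv unfolding substructure_def EF'_def by blast
qed

definition meets_substructures :: "'a set \<Rightarrow> 'a set set \<Rightarrow> 'a set \<Rightarrow> bool" where
  "meets_substructures V E D \<longleftrightarrow> (\<forall>VF EF X. substructure V E VF EF X \<longrightarrow> X \<inter> D \<noteq> {})"

lemma substructure_attached_once:
  assumes F: "forest V E" and meets: "meets_substructures V E D" and leaf: "nbhd E l = {p}"
    and sub: "substructure (V - {l, p}) (delete_vertices E {l, p}) VF EF X" and "X \<inter> D = {}"
  obtains g where "{x \<in> X. {x, p} \<in> E} = {g}"
proof -
  have G: "graph V E" and acyclic: "\<not> has_cycle E" using F unfolding forest_def by auto
  have X: "X \<subseteq> V - {l, p}" using sub unfolding substructure_def is_subdivision_def by blast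
  have "{x \<in> X. {x, p} \<in> E} \<noteq> {}"
  proof
    assume detached: "{x \<in> X. {x, p} \<in> E} = {}"
    have "\<forall>x\<in>X. nbhd E x \<inter> {l, p} = {}"
    proof
      fix x assume "x \<in> X"
      then have "x \<noteq> l" "x \<noteq> p" "{x, p} \<notin> E" using X detached by auto
      then show "nbhd E x \<inter> {l, p} = {}"
        using nbhd_minus_leaf[OF leaf, of x] nbhd_delete_vertices[of x "{l, p}" E] by auto
    qed
    then have "substructure V E VF EF X" by (rule substructure_delete_vertices_lift[OF G sub])
    then show False using meets \<open>X \<inter> D = {}\<close> unfolding meets_substructures_def by blast
  qed
  moreover have "g = g'" if "g \<in> X" "{g, p} \<in> E" "g' \<in> X" "{g', p} \<in> E" for g g'
  proof (rule acyclic_neighbours_joined_avoiding_eq[OF acyclic delete_vertices_subset])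
    show "\<forall>e\<in>delete_vertices E {l, p}. p \<notin> e" unfolding delete_vertices_def by blast
    show "(\<lambda>x y. {x, y} \<in> delete_vertices E {l, p})\<^sup>*\<^sup>* g g'"
      using substructure_connected[OF sub] that by blast
  qed (use that in blast)+
  ultimately show ?thesis using that by blast
qed

lemma substructure_contains_leaf:
  assumes G: "graph V E" "finite V" and leaf: "nbhd E c = {p}"
    and sub: "substructure (V - {c, p}) (delete_vertices E {c, p}) VF EF X"
    and attach: "{x \<in> X. {x, p} \<in> E} = {q}"
  obtains x u where "x \<in> X" "nbhd E x = {u}"
proof -
  define E' where "E' = delete_vertices E {c, p}"
  obtain Et s where st: "tree X Et" "s ` Et \<inter> X = {}" "VF = X \<union> s ` Et"
    "EF = {{x, s e} |x e. e \<in> Et \<and> x \<in> e}" "VF \<subseteq> V - {c, p}"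
    unfolding E'_def by (rule substructureE[OF sub])
  have GX: "graph X Et" and FX: "forest X Et" using st(1) tree_imp_forest unfolding tree_def by auto
  have X: "X \<subseteq> V - {c, p}" "q \<in> X" using st(3,5) attach by auto
  have nbhd_X: "nbhd E x = nbhd E' x \<union> (if x = q then {p} else {})"
    and nbhd_EF: "nbhd E' x = s ` {e \<in> Et. x \<in> e}" if "x \<in> X" for x
  proof -
    have "x \<noteq> c" "x \<noteq> p" using that X(1) by auto
    moreover have "{x, p} \<in> E \<longleftrightarrow> x = q" using attach that by blast
    ultimately show "nbhd E x = nbhd E' x \<union> (if x = q then {p} else {})"
      using nbhd_minus_leaf[OF leaf] unfolding E'_def by simp
    show "nbhd E' x = s ` {e \<in> Et. x \<in> e}"
      using substructure_nbhd_eq[OF sub _ that] subdivision_nbhd[OF st(2) that] st(4)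
        finite_edges[OF graph_delete_vertices[OF G(1)]] G(2)
      unfolding E'_def by simp
  qed
  show ?thesis
  proof (cases "X = {q}")
    case True
    have "Et = {}" using GX True unfolding graph_def by (auto simp: card_2_iff)
    then have "nbhd E q = {p}" using nbhd_X[OF X(2)] nbhd_EF[OF X(2)] by simp
    then show ?thesis using that X(2) by blast
  next
    case False
    then obtain z where z: "z \<in> X" "z \<noteq> q" using X(2) by blast
    have "(\<lambda>x y. {x, y} \<in> Et)\<^sup>*\<^sup>* q z"
      using st(1) z(1) X(2) unfolding tree_def connected_graph_def by blast
    then obtain y where "{q, y} \<in> Et"
      using z(2) by (metis (no_types, lifting) converse_rtranclpE)
    then obtain x1 x2 u1 u2 where "x1 \<noteq> x2" "nbhd Et x1 = {u1}" "nbhd Et x2 = {u2}"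
      by (rule forest_two_leaves[OF FX])
    then obtain w u where w: "w \<noteq> q" "nbhd Et w = {u}" by metis
    have "w \<in> X" using graph_nbhdD[OF GX, of u w] w(2) by simp
    have "{e \<in> Et. w \<in> e} = {{w, u}}" using incident_edges_eq[OF GX, of w] w(2) by simp
    then have "nbhd E w = {s {w, u}}" using nbhd_X[OF \<open>w \<in> X\<close>] nbhd_EF[OF \<open>w \<in> X\<close>] w(1) by simp
    then show ?thesis using that \<open>w \<in> X\<close> by blast
  qed
qed

lemma substructure_isolated_vertex:
  assumes G: "graph V E" and "v \<in> V" "nbhd E v = {}"
  shows "substructure V E {v} {} {v}"
proof -
  have "\<not> has_cycle ({} :: 'a set set)" unfolding has_cycle_def by fastforce
  then have "tree {v} {}" unfolding tree_def graph_def connected_graph_def by auto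
  then have "is_subdivision {v} {} {v}" unfolding is_subdivision_def
    by (intro exI[of _ "{}"] exI[of _ "\<lambda>_. v"]) auto
  moreover have "deg E v = deg {} v"
    using deg_eq_card_nbhd[OF G] assms(3) unfolding deg_def by simp
  ultimately show ?thesis unfolding substructure_def using assms(2) by auto
qed

lemma meets_substructures_delete_vertex:
  assumes G: "graph V E" and meets: "meets_substructures V E D" and "nbhd E c \<subseteq> D"
  shows "meets_substructures (V - {c}) (delete_vertices E {c}) D"
  unfolding meets_substructures_def
proof (intro allI impI notI)
  fix VF EF X assume sub: "substructure (V - {c}) (delete_vertices E {c}) VF EF X"
    and "X \<inter> D = {}"
  then have "\<forall>x\<in>X. nbhd E x \<inter> {c} = {}" using assms(3) nbhd_sym[of c E] by blast
  then have "substructure V E VF EF X" by (rule substructure_delete_vertices_lift[OF G sub])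
  then show False using meets \<open>X \<inter> D = {}\<close> unfolding meets_substructures_def by blast
qed

lemma dominating_pairing_insert_edge:
  assumes G: "graph V E" and "{l, p} \<in> E"
    and P: "dominating_pairing (V - {l, p}) (delete_vertices E {l, p}) D P"
  shows "dominating_pairing V E D (insert {l, p} P)"
proof -
  have "l \<noteq> p" "l \<in> V" "p \<in> V" using graph_edgeD[OF G \<open>{l, p} \<in> E\<close>] by auto
  have "q \<subseteq> V - {l, p}" if "q \<in> P" for q using dominating_pairingD(2)[OF P that] .
  moreover have "\<exists>q\<in>insert {l, p} P. q \<subseteq> closed_nbhd V E w" if "w \<in> V - D" for w
  proof (cases "w \<in> {l, p}")
    case True
    then have "{l, p} \<subseteq> closed_nbhd V E w"
      using \<open>l \<in> V\<close> \<open>p \<in> V\<close> \<open>{l, p} \<in> E\<close> unfolding closed_nbhd_def by (auto simp: insert_commute)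
    then show ?thesis by blast
  next
    case False
    then show ?thesis
      using dominating_pairingD(4)[OF P, of w] that closed_nbhd_delete_vertices[of V "{l, p}" E w]
      by blast
  qed
  ultimately show ?thesis
    using P \<open>l \<noteq> p\<close> \<open>l \<in> V\<close> \<open>p \<in> V\<close> unfolding dominating_pairing_def by auto
qed

lemma dominating_pairing_insert_vertex:
  assumes P: "dominating_pairing (V - {c}) (delete_vertices E {c}) D P" and "c \<in> D"
  shows "dominating_pairing V E D P"
proof -
  have "\<forall>q\<in>P. card q = 2 \<and> q \<subseteq> V" using dominating_pairingD(1,2)[OF P] by blast
  moreover have "\<forall>q\<in>P. \<forall>q'\<in>P. q \<inter> q' \<noteq> {} \<longrightarrow> q = q'" using dominating_pairingD(3)[OF P] by blast
  moreover have "\<forall>w\<in>V - D. \<exists>q\<in>P. q \<subseteq> closed_nbhd V E w"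
  proof
    fix w assume "w \<in> V - D"
    then have "w \<in> V - {c} - D" using \<open>c \<in> D\<close> by blast
    then obtain q where "q \<in> P" "q \<subseteq> closed_nbhd (V - {c}) (delete_vertices E {c}) w"
      using dominating_pairingD(4)[OF P] by blast
    then show "\<exists>q\<in>P. q \<subseteq> closed_nbhd V E w"
      using closed_nbhd_delete_vertices[of V "{c}" E w] by blast
  qed
  ultimately show ?thesis unfolding dominating_pairing_def by (intro conjI)
qed

lemma meets_substructures_delete_leaf_outside:
  assumes F: "forest V E" and meets: "meets_substructures V E D"
    and leaf: "nbhd E l = {p}" and "l \<notin> D"
  shows "meets_substructures (V - {l, p}) (delete_vertices E {l, p}) D"
  unfolding meets_substructures_def
proof (intro allI impI notI)
  fix VF EF X assume sub: "substructure (V - {l, p}) (delete_vertices E {l, p}) VF EF X"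
    and "X \<inter> D = {}"
  obtain g where "{x \<in> X. {x, p} \<in> E} = {g}"
    by (rule substructure_attached_once[OF F meets leaf sub \<open>X \<inter> D = {}\<close>])
  then have "substructure V E (VF \<union> {l, p}) (insert {g, p} (insert {l, p} EF)) (insert l X)"
    using substructure_insert_leaf[OF _ _ leaf sub] F unfolding forest_def by blast
  then show False using meets \<open>X \<inter> D = {}\<close> \<open>l \<notin> D\<close> unfolding meets_substructures_def by blast
qed

lemma meets_substructures_delete_leaf_inside:
  assumes F: "forest V E" and meets: "meets_substructures V E D"
    and leaf: "nbhd E c = {p}" and leaves: "\<forall>x u. nbhd E x = {u} \<longrightarrow> x \<in> D"
  shows "meets_substructures (V - {c, p}) (delete_vertices E {c, p}) D"
  unfolding meets_substructures_def
proof (intro allI impI notI)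
  fix VF EF X assume sub: "substructure (V - {c, p}) (delete_vertices E {c, p}) VF EF X"
    and "X \<inter> D = {}"
  obtain g where "{x \<in> X. {x, p} \<in> E} = {g}"
    by (rule substructure_attached_once[OF F meets leaf sub \<open>X \<inter> D = {}\<close>])
  then obtain x u where "x \<in> X" "nbhd E x = {u}"
    using substructure_contains_leaf[OF _ _ leaf sub] F unfolding forest_def by metis
  then show False using leaves \<open>X \<inter> D = {}\<close> by blast
qed

lemma meets_substructures_reduce:
  assumes F: "forest V E" and meets: "meets_substructures V E D" and "V \<noteq> {}"
  shows "(\<exists>c\<in>V \<inter> D. meets_substructures (V - {c}) (delete_vertices E {c}) D) \<or>
    (\<exists>l p. {l, p} \<in> E \<and> meets_substructures (V - {l, p}) (delete_vertices E {l, p}) D)"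
proof -
  have G: "graph V E" using F unfolding forest_def by blast
  obtain c where c: "c \<in> V" "nbhd E c = {} \<or> (\<exists>u. nbhd E c = {u})"
    by (rule forest_leaf_or_isolated[OF F \<open>V \<noteq> {}\<close>])
  show ?thesis
  proof (cases "nbhd E c = {}")
    case True
    then have "c \<in> D"
      using substructure_isolated_vertex[OF G c(1)] meets unfolding meets_substructures_def by blast
    then show ?thesis using meets_substructures_delete_vertex[OF G meets] True c(1) by blast
  next
    case False
    then obtain p where p: "nbhd E c = {p}" using c(2) by blast
    show ?thesis
    proof (cases "\<exists>l p. nbhd E l = {p} \<and> l \<notin> D")
      case True
      then obtain l q where l: "nbhd E l = {q}" "l \<notin> D" by blast
      then have "meets_substructures (V - {l, q}) (delete_vertices E {l, q}) D"
        by (rule meets_substructures_delete_leaf_outside[OF F meets])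
      then show ?thesis using leaf_edge[OF l(1)] by blast
    next
      case False
      then have "meets_substructures (V - {c, p}) (delete_vertices E {c, p}) D"
        by (intro meets_substructures_delete_leaf_inside[OF F meets p]) blast
      then show ?thesis using leaf_edge[OF p] by blast
    qed
  qed
qed

lemma dominating_pairing_exists:
  assumes "forest V E" "meets_substructures V E D"
  obtains P where "dominating_pairing V E D P"
  using assms
proof (induction "card V" arbitrary: V E thesis rule: less_induct)
  case less
  have G: "graph V E" and fin: "finite V" using less.prems(2) unfolding forest_def by auto
  show ?case
  proof (cases "V = {}")
    case True
    then show ?thesis using less.prems(1)[of "{}"] unfolding dominating_pairing_def by simp
  next
    case False
    have smaller: "card (V - A) < card V" if "A \<inter> V \<noteq> {}" for A
      using that fin by (intro psubset_card_mono) auto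
    from meets_substructures_reduce[OF less.prems(2,3) False] show ?thesis
    proof (elim disjE exE conjE bexE)
      fix c assume c: "c \<in> V \<inter> D"
        and meets: "meets_substructures (V - {c}) (delete_vertices E {c}) D"
      obtain P where "dominating_pairing (V - {c}) (delete_vertices E {c}) D P"
        using less.hyps[OF smaller _ forest_delete_vertices[OF less.prems(2)] meets] c by blast
      then have "dominating_pairing V E D P" by (rule dominating_pairing_insert_vertex) (use c in blast)
      then show ?thesis by (rule less.prems(1))
    next
      fix l p assume e: "{l, p} \<in> E"
        and meets: "meets_substructures (V - {l, p}) (delete_vertices E {l, p}) D"
      have "l \<in> V" using graph_edgeD[OF G e] by blast
      obtain P where "dominating_pairing (V - {l, p}) (delete_vertices E {l, p}) D P"
        using less.hyps[OF smaller _ forest_delete_vertices[OF less.prems(2)] meets] \<open>l \<in> V\<close>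
        by blast
      then show ?thesis by (rule less.prems(1)[OF dominating_pairing_insert_edge[OF G e]])
    qed
  qed
qed

theorem dominator_wins_iff_transversal:
  assumes F: "forest V E" and "D \<subseteq> V"
  shows "dominator_wins V E D \<longleftrightarrow> transversal V (hyp_X V E) D"
proof
  assume "dominator_wins V E D"
  then show "transversal V (hyp_X V E) D"
    using staller_wins_if_substructure_avoids F \<open>D \<subseteq> V\<close>
    unfolding dominator_wins_def transversal_def hyp_X_def forest_def by blast
next
  assume "transversal V (hyp_X V E) D"
  then have "meets_substructures V E D"
    unfolding transversal_def meets_substructures_def hyp_X_def by blast
  then obtain P where "dominating_pairing V E D P" by (rule dominating_pairing_exists[OF F])
  then show "dominator_wins V E D" by (rule dominator_wins_if_dominating_pairing)
qed

lemma transversal_mono: "transversal V H A \<Longrightarrow> A \<subseteq> B \<Longrightarrow> B \<subseteq> V \<Longrightarrow> transversal V H B"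
  unfolding transversal_def by blast

lemma minimal_transversal_iff:
  assumes "D \<subseteq> V"
  shows "minimal_transversal V H D \<longleftrightarrow> transversal V H D \<and> (\<forall>v\<in>D. \<not> transversal V H (D - {v}))"
proof
  assume "minimal_transversal V H D"
  then show "transversal V H D \<and> (\<forall>v\<in>D. \<not> transversal V H (D - {v}))"
    unfolding minimal_transversal_def by blast
next
  assume min: "transversal V H D \<and> (\<forall>v\<in>D. \<not> transversal V H (D - {v}))"
  have "\<not> transversal V H T" if "T \<subset> D" for T
  proof
    assume "transversal V H T"
    obtain v where "v \<in> D" "T \<subseteq> D - {v}" using \<open>T \<subset> D\<close> by blast
    then have "transversal V H (D - {v})"
      using transversal_mono[OF \<open>transversal V H T\<close>] assms by blast
    then show False using min \<open>v \<in> D\<close> by blast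
  qed
  then show "minimal_transversal V H D" using min unfolding minimal_transversal_def by blast
qed

lemma critical_transversal_iff:
  assumes "D \<subseteq> V"
  shows "D \<noteq> {} \<and> transversal V H D \<and> (\<forall>v\<in>D. \<not> transversal V H (D - {v})) \<longleftrightarrow>
    H \<noteq> {} \<and> minimal_transversal V H D"
proof -
  have "H \<noteq> {}" if "v \<in> D" "\<not> transversal V H (D - {v})" for v
    using that assms unfolding transversal_def by blast
  moreover have "D \<noteq> {}" if "H \<noteq> {}" "transversal V H D"
    using that unfolding transversal_def by blast
  ultimately show ?thesis unfolding minimal_transversal_iff[OF assms] by blast
qed

theorem proposition6p5:
  fixes V :: "'a set" and E :: "'a set set" and D :: "'a set"
  assumes "tree V E" and "D \<subseteq> V"
  shows "MBD_dominator_critical V E D \<longleftrightarrow>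
           (hyp_X V E \<noteq> {} \<and> minimal_transversal V (hyp_X V E) D)"
proof -
  have F: "forest V E" using assms(1) by (rule tree_imp_forest)
  have "(\<forall>v\<in>D. \<not> dominator_wins V E (D - {v})) \<longleftrightarrow>
      (\<forall>v\<in>D. \<not> transversal V (hyp_X V E) (D - {v}))"
    using dominator_wins_iff_transversal[OF F] assms(2) by blast
  then show ?thesis
    unfolding MBD_dominator_critical_def dominator_wins_iff_transversal[OF F assms(2)]
    using critical_transversal_iff[OF assms(2)] by simp
qed

end
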